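(* The semigroup $S=sgp^+\langle a,b\mid aba=ba\rangle$ is not automatic.
   Context: $sgp^+\langle A\mid R\rangle$ is the free semigroup $A^+$ of nonempty words modulo the congruence generated by $R$. Automaticity: regular = accepted by a finite automaton. With $\$\notin A$, $A(2,\$)=(A\cup\{\$\})^2\setminus\{(\$,\$)\}$; $(\alpha,\beta)\delta_A^R$ is the word over $A(2,\$)$ obtained by padding the shorter word on the right with $\$$'s and reading letter pairs. A semigroup $S$ is automatic if there are a finite generating set $A$ (with canonical epimorphism $\phi:A^+\to S$) and a regular $L\subseteq A^+$ with $\phi(L)=S$ such that for every $a\in A\cup\{\varepsilon\}$ the language $\{(\alpha,\beta)\delta^R_A:\alpha,\beta\in L,\ \phi(\alpha a)=\phi(\beta)\}$ is regular. *)

theory Defs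
  imports Main
begin

text \<open>For languages contained in the words over a finite alphabet this is
exactly the usual notion.\<close>

definition regular :: "'x list set \<Rightarrow> bool" where
  "regular L \<longleftrightarrow> (\<exists>(Q :: nat set) q0 (\<delta> :: nat \<Rightarrow> 'x \<Rightarrow> nat) F.
      finite Q \<and> q0 \<in> Q \<and> (\<forall>q\<in>Q. \<forall>x. \<delta> q x \<in> Q) \<and> F \<subseteq> Q \<and>
      L = {w. foldl \<delta> q0 w \<in> F})"

section \<open>Padded pair words (padding symbol \$ rendered as None)\<close>

definition padR :: "'a list \<Rightarrow> 'a list \<Rightarrow> ('a option \<times> 'a option) list" where
  "padR \<alpha> \<beta> = zip (map Some \<alpha> @ replicate (length \<beta> - length \<alpha>) None)
                   (map Some \<beta> @ replicate (length \<alpha> - length \<beta>) None)"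

fun evalw :: "('s \<Rightarrow> 's \<Rightarrow> 's) \<Rightarrow> 's list \<Rightarrow> 's" where
  "evalw mult [] = undefined"
| "evalw mult (x # xs) = foldl mult x xs"

text \<open>Here the letter
a is encoded as Some a and \<epsilon> as None.\<close>
definition automatic :: "'s set \<Rightarrow> ('s \<Rightarrow> 's \<Rightarrow> 's) \<Rightarrow> bool" where
  "automatic S mult \<longleftrightarrow> (\<exists>A L.
      A \<subseteq> S \<and> finite A \<and>
      L \<subseteq> lists A - {[]} \<and> regular L \<and> evalw mult ` L = S \<and>
      (\<forall>a \<in> Some ` A \<union> {None}.
         regular {padR \<alpha> \<beta> | \<alpha> \<beta>. \<alpha> \<in> L \<and> \<beta> \<in> L \<and>
            evalw mult (\<alpha> @ (case a of None \<Rightarrow> [] | Some x \<Rightarrow> [x])) = evalw mult \<beta>}))"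

definition elem_step :: "('g list \<times> 'g list) set \<Rightarrow> ('g list \<times> 'g list) set" where
  "elem_step R = {(x @ l @ y, x @ r @ y) | x y l r. (l, r) \<in> R}"

definition pcong :: "('g list \<times> 'g list) set \<Rightarrow> ('g list \<times> 'g list) set" where
  "pcong R = (elem_step R \<union> (elem_step R)\<inverse>)\<^sup>*"

definition pclass :: "('g list \<times> 'g list) set \<Rightarrow> 'g list \<Rightarrow> 'g list set" where
  "pclass R w = pcong R `` {w}"

definition pcarrier :: "('g list \<times> 'g list) set \<Rightarrow> 'g list set set" where
  "pcarrier R = pclass R ` {w. w \<noteq> []}"

definition pmult :: "('g list \<times> 'g list) set \<Rightarrow> 'g list set \<Rightarrow> 'g list set \<Rightarrow> 'g list set" where
  "pmult R X Y = pclass R ((SOME u. u \<in> X) @ (SOME v. v \<in> Y))"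

datatype gen_ab = ga | gb

definition R_aba :: "(gen_ab list \<times> gen_ab list) set" where
  "R_aba = {([ga, gb, ga], [gb, ga])}"

end

theory Submission
  imports Defs
begin

(* The number of b's is an invariant of S, the words a^k b^n are alone in their classes,
   and a^k b^n a = b^n a for n > 0. Given an automatic structure (A, L), pick for every n
   words gamma_n, alpha_n in L representing b^n a and a^k b^n, with k so large that the first
   |gamma_n| generators of alpha_n spell only a's; then alpha_n a = gamma_n. The automaton for
   L_a is in one of finitely many states after reading the first |gamma_n| letter pairs of
   (alpha_n, gamma_n), so for some m \<noteq> n the tails of alpha_m and alpha_n can be exchanged.
   This yields a word of L whose product with a equals gamma_m, although it contains n b's. *)

lemma elem_step_append_context:
  "(u, v) \<in> elem_step R \<Longrightarrow> (x @ u @ y, x @ v @ y) \<in> elem_step R"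
  unfolding elem_step_def by (auto, metis append.assoc)

lemma pcong_append_context:
  assumes "(u, v) \<in> pcong R" shows "(x @ u @ y, x @ v @ y) \<in> pcong R"
  using assms unfolding pcong_def
proof (induction rule: rtrancl_induct)
  case (step v w)
  then have "(x @ v @ y, x @ w @ y) \<in> elem_step R \<union> (elem_step R)\<inverse>"
    using elem_step_append_context by blast
  with step.IH show ?case by (rule rtrancl_into_rtrancl)
qed simp

lemma pcong_refl [simp]: "(u, u) \<in> pcong R"
  unfolding pcong_def by simp

lemma pcong_sym: "(u, v) \<in> pcong R \<Longrightarrow> (v, u) \<in> pcong R"
  unfolding pcong_def
  by (metis converse_Un converse_converse rtrancl_converseI sup_commute)

lemma pcong_trans: "(u, v) \<in> pcong R \<Longrightarrow> (v, w) \<in> pcong R \<Longrightarrow> (u, w) \<in> pcong R"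
  unfolding pcong_def by (rule rtrancl_trans)

lemma elem_step_pcong: "(u, v) \<in> elem_step R \<Longrightarrow> (u, v) \<in> pcong R"
  unfolding pcong_def by blast

lemma relator_pcong:
  assumes "(l, r) \<in> R" shows "(l, r) \<in> pcong R"
proof -
  have "([] @ l @ [], [] @ r @ []) \<in> elem_step R"
    unfolding elem_step_def using assms by blast
  then show ?thesis by (simp add: elem_step_pcong)
qed

lemma mem_pclass_iff: "v \<in> pclass R u \<longleftrightarrow> (u, v) \<in> pcong R"
  unfolding pclass_def by simp

lemma pclass_eq_iff: "pclass R u = pclass R v \<longleftrightarrow> (u, v) \<in> pcong R"
proof
  assume "pclass R u = pclass R v"
  then show "(u, v) \<in> pcong R" by (metis mem_pclass_iff pcong_refl)
next
  assume "(u, v) \<in> pcong R"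
  then show "pclass R u = pclass R v"
    unfolding pclass_def by (auto intro: pcong_trans pcong_sym)
qed

lemma pclass_irreducible:
  assumes "\<And>x y l r. (l, r) \<in> R \<Longrightarrow> w \<noteq> x @ l @ y \<and> w \<noteq> x @ r @ y"
  shows "pclass R w = {w}"
proof -
  have "(w, v) \<notin> elem_step R \<union> (elem_step R)\<inverse>" for v
    using assms unfolding elem_step_def by blast
  then have "v = w" if "(w, v) \<in> pcong R" for v
    using that unfolding pcong_def by (auto elim: converse_rtranclE)
  then show ?thesis unfolding pclass_def by auto
qed

lemma count_list_pcong:
  assumes "\<And>l r. (l, r) \<in> R \<Longrightarrow> count_list l c = count_list r c"
    and "(u, v) \<in> pcong R"
  shows "count_list u c = count_list v c"
  using assms(2) unfolding pcong_def
proof (induction rule: rtrancl_induct)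
  case (step v w)
  then show ?case using assms(1) unfolding elem_step_def by auto
qed simp

definition class_rep :: "'a list set \<Rightarrow> 'a list" where
  "class_rep X = (SOME u. u \<in> X)"

abbreviation rep_word :: "'a list set list \<Rightarrow> 'a list" where
  "rep_word xs \<equiv> concat (map class_rep xs)"

lemma class_rep_pcong: "(w, class_rep (pclass R w)) \<in> pcong R"
proof -
  have "w \<in> pclass R w" by (simp add: mem_pclass_iff)
  then have "class_rep (pclass R w) \<in> pclass R w" unfolding class_rep_def by (rule someI)
  then show ?thesis by (simp add: mem_pclass_iff)
qed

lemma pclass_class_rep: "X \<in> pcarrier R \<Longrightarrow> pclass R (class_rep X) = X"
  unfolding pcarrier_def using class_rep_pcong pclass_eq_iff pcong_sym by blast

lemma class_rep_singleton [simp]: "class_rep {w} = w"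
  unfolding class_rep_def by simp

lemma pmult_pclass: "pmult R (pclass R u) (pclass R v) = pclass R (u @ v)"
proof -
  have "(u @ v, class_rep (pclass R u) @ v) \<in> pcong R"
    using pcong_append_context[OF class_rep_pcong, where x = "[]" and y = v] by simp
  moreover have "(class_rep (pclass R u) @ v, class_rep (pclass R u) @ class_rep (pclass R v)) \<in> pcong R"
    using pcong_append_context[OF class_rep_pcong, where x = "class_rep (pclass R u)" and y = "[]"]
    by simp
  ultimately show ?thesis
    unfolding pmult_def class_rep_def[symmetric] pclass_eq_iff
    by (blast intro: pcong_sym pcong_trans)
qed

lemma foldl_pmult_pclass:
  "set xs \<subseteq> pcarrier R \<Longrightarrow> foldl (pmult R) (pclass R w) xs = pclass R (w @ rep_word xs)"
proof (induction xs arbitrary: w)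
  case (Cons y ys)
  then have "pmult R (pclass R w) y = pclass R (w @ class_rep y)"
    using pmult_pclass[of R w "class_rep y"] pclass_class_rep[of y R] by simp
  with Cons show ?case by simp
qed simp

lemma evalw_pmult:
  assumes "xs \<noteq> []" "set xs \<subseteq> pcarrier R"
  shows "evalw (pmult R) xs = pclass R (rep_word xs)"
proof -
  obtain y ys where xs: "xs = y # ys" using assms(1) by (cases xs) auto
  then have "evalw (pmult R) xs = foldl (pmult R) (pclass R (class_rep y)) ys"
    using assms(2) pclass_class_rep[of y R] by simp
  also have "\<dots> = pclass R (rep_word xs)"
    using assms(2) xs foldl_pmult_pclass[of ys R] by simp
  finally show ?thesis .
qed

lemma evalw_pmult_lists:
  assumes "A \<subseteq> pcarrier R" "xs \<in> lists A - {[]}"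
  shows "evalw (pmult R) xs = pclass R (rep_word xs)"
  using assms by (intro evalw_pmult) auto

lemma pclass_singleton_in_generators:
  assumes A: "A \<subseteq> pcarrier R"
    and L: "L \<subseteq> lists A - {[]}" "evalw (pmult R) ` L = pcarrier R"
    and irreducible: "pclass R [c] = {[c]}"
  shows "pclass R [c] \<in> A"
proof -
  have "pclass R [c] \<in> pcarrier R" unfolding pcarrier_def by blast
  then obtain \<omega> where \<omega>: "\<omega> \<in> L" "evalw (pmult R) \<omega> = pclass R [c]"
    using L(2) by (metis imageE)
  then have "pclass R (rep_word \<omega>) = {[c]}"
    using evalw_pmult_lists[OF A] L(1) irreducible by auto
  then have "rep_word \<omega> = [c]" by (metis mem_pclass_iff pcong_refl singletonD)
  then have "[c] \<in> set (map class_rep \<omega>)"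
    by (induction "map class_rep \<omega>" arbitrary: \<omega>) (auto simp: append_eq_Cons_conv)
  then obtain g where g: "g \<in> set \<omega>" "class_rep g = [c]" by auto
  with \<omega>(1) L(1) have "g \<in> A" by auto
  with g(2) A show ?thesis using pclass_class_rep by fastforce
qed

lemma length_concat_map_bounded:
  assumes "finite A"
  obtains M where "\<And>xs. set xs \<subseteq> A \<Longrightarrow> length (concat (map f xs)) \<le> M * length xs"
proof -
  obtain M where M: "\<forall>g\<in>A. length (f g) \<le> M"
    using assms finite_nat_set_iff_bounded_le[of "(\<lambda>g. length (f g)) ` A"] by auto
  have "length (concat (map f xs)) \<le> M * length xs" if "set xs \<subseteq> A" for xs
    using that by (induction xs) (use M in auto)
  then show ?thesis using that by blast
qed

lemma regular_right_congruent_pair: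
  fixes u :: "nat \<Rightarrow> 'x list"
  assumes "regular L"
  obtains i j where "i \<noteq> j" "\<And>v. u i @ v \<in> L \<longleftrightarrow> u j @ v \<in> L"
proof -
  obtain Q :: "nat set" and q0 \<delta> F where Q: "finite Q" "q0 \<in> Q" "\<forall>q\<in>Q. \<forall>x. \<delta> q x \<in> Q"
    and L: "L = {w. foldl \<delta> q0 w \<in> F}"
    using assms unfolding regular_def by blast
  have "foldl \<delta> q w \<in> Q" if "q \<in> Q" for q w
    using that Q(3) by (induction w arbitrary: q) auto
  then have "finite (range (\<lambda>i. foldl \<delta> q0 (u i)))"
    using Q(1,2) by (auto intro: finite_subset)
  then have "\<not> inj (\<lambda>i. foldl \<delta> q0 (u i))"
    using finite_imageD infinite_UNIV_nat by blast
  then obtain i j where "i \<noteq> j" "foldl \<delta> q0 (u i) = foldl \<delta> q0 (u j)"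
    unfolding inj_def by blast
  then show ?thesis using that[of i j] unfolding L by simp
qed

lemma padR_inj:
  assumes "padR a b = padR a' b'" shows "a = a' \<and> b = b'"
proof -
  have unpad: "map the (filter (\<lambda>z. z \<noteq> None) (map Some a @ replicate k None)) = a" for a :: "'a list" and k
    by (induction a) (auto simp: filter_replicate)
  have "map fst (padR a b) = map Some a @ replicate (length b - length a) None"
    "map snd (padR a b) = map Some b @ replicate (length a - length b) None"
    "map fst (padR a' b') = map Some a' @ replicate (length b' - length a') None"
    "map snd (padR a' b') = map Some b' @ replicate (length a' - length b') None"
    unfolding padR_def by simp_all
  then show ?thesis using assms unpad by metis
qed

lemma padR_append_same_length:
  assumes "length a = length g"
  shows "padR (a @ b) g = zip (map Some a) (map Some g) @ map (\<lambda>c. (Some c, None)) b"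
  using assms by (simp add: padR_def zip_replicate2 zip_map1 map_zip_map)

lemma regular_padR_exchange:
  fixes \<alpha> \<gamma> :: "nat \<Rightarrow> 'a list"
  assumes "regular {padR u v | u v. P u v}"
    and "\<And>n. P (\<alpha> n) (\<gamma> n)" and "\<And>n. length (\<gamma> n) \<le> length (\<alpha> n)"
  obtains i j where "i \<noteq> j" "P (take (length (\<gamma> i)) (\<alpha> i) @ drop (length (\<gamma> j)) (\<alpha> j)) (\<gamma> i)"
proof -
  let ?Lp = "{padR u v | u v. P u v}"
  let ?head = "\<lambda>n. zip (map Some (take (length (\<gamma> n)) (\<alpha> n))) (map Some (\<gamma> n))"
  let ?tail = "\<lambda>n. map (\<lambda>c. (Some c, None)) (drop (length (\<gamma> n)) (\<alpha> n))"
  obtain i j where "i \<noteq> j" and cong: "\<And>v. ?head i @ v \<in> ?Lp \<longleftrightarrow> ?head j @ v \<in> ?Lp"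
    using regular_right_congruent_pair[OF assms(1), of ?head] by blast
  have split: "padR (take (length (\<gamma> n)) (\<alpha> n) @ drop (length (\<gamma> m)) (\<alpha> m)) (\<gamma> n)
      = ?head n @ ?tail m" for n m
    using assms(3) by (intro padR_append_same_length) simp
  have "padR (\<alpha> j) (\<gamma> j) \<in> ?Lp" using assms(2) by blast
  moreover have "padR (\<alpha> j) (\<gamma> j) = ?head j @ ?tail j" using split[of j j] by simp
  ultimately have "?head i @ ?tail j \<in> ?Lp" using cong by simp
  then obtain a b where "padR (take (length (\<gamma> i)) (\<alpha> i) @ drop (length (\<gamma> j)) (\<alpha> j)) (\<gamma> i)
      = padR a b" "P a b"
    unfolding split[of i j, symmetric] by blast
  then have "P (take (length (\<gamma> i)) (\<alpha> i) @ drop (length (\<gamma> j)) (\<alpha> j)) (\<gamma> i)"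
    using padR_inj by metis
  with \<open>i \<noteq> j\<close> show ?thesis by (rule that)
qed

lemma replicate_append_replicate_neq:
  assumes "a \<noteq> b"
  shows "replicate k a @ replicate n b \<noteq> x @ b # a # y"
proof
  let ?w = "replicate k a @ replicate n b"
  assume eq: "?w = x @ b # a # y"
  then have "?w ! length x = b" "?w ! Suc (length x) = a" "Suc (length x) < length ?w"
    by (simp_all add: nth_append)
  then show False using assms by (auto simp: nth_append split: if_splits)
qed

lemma append_eq_replicate_append_prefix:
  assumes "p @ q = replicate k c @ v" "length p \<le> k"
  shows "p = replicate (length p) c"
proof -
  have "p = take (length p) (replicate k c @ v)" using assms(1) by (metis append_eq_conv_conj)
  then show ?thesis using assms(2) by simp
qed

lemma pclass_R_aba_replicate:
  "pclass R_aba (replicate k ga @ replicate n gb) = {replicate k ga @ replicate n gb}"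
proof (rule pclass_irreducible)
  fix x y l r
  assume "(l, r) \<in> R_aba"
  then have "x @ l @ y = (x @ [ga]) @ gb # ga # y" "x @ r @ y = x @ gb # ga # y"
    unfolding R_aba_def by simp_all
  then show "replicate k ga @ replicate n gb \<noteq> x @ l @ y \<and> replicate k ga @ replicate n gb \<noteq> x @ r @ y"
    using replicate_append_replicate_neq[of ga gb k n "x @ [ga]" y]
      replicate_append_replicate_neq[of ga gb k n x y] by simp
qed

lemma count_gb_pcong_R_aba:
  "(u, v) \<in> pcong R_aba \<Longrightarrow> count_list u gb = count_list v gb"
  by (rule count_list_pcong) (auto simp: R_aba_def)

lemma pcong_R_aba_aba: "([ga, gb, ga], [gb, ga]) \<in> pcong R_aba"
  by (rule relator_pcong) (simp add: R_aba_def)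

lemma pcong_R_aba_a_b_power_a:
  "(ga # replicate (Suc n) gb @ [ga], replicate (Suc n) gb @ [ga]) \<in> pcong R_aba"
proof (induction n)
  case 0
  show ?case using pcong_R_aba_aba by simp
next
  case (Suc n)
  let ?B = "replicate (Suc n) gb"
  have "(ga # ?B @ [gb, ga], ga # ?B @ [ga, gb, ga]) \<in> pcong R_aba"
    using pcong_append_context[OF pcong_sym[OF pcong_R_aba_aba], where x = "ga # ?B" and y = "[]"]
    by simp
  moreover have "(ga # ?B @ [ga, gb, ga], ?B @ [ga, gb, ga]) \<in> pcong R_aba"
    using pcong_append_context[OF Suc.IH, where x = "[]" and y = "[gb, ga]"] by simp
  moreover have "(?B @ [ga, gb, ga], ?B @ [gb, ga]) \<in> pcong R_aba"
    using pcong_append_context[OF pcong_R_aba_aba, where x = ?B and y = "[]"] by simp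
  moreover have "replicate (Suc (Suc n)) gb @ [ga] = ?B @ [gb, ga]"
    by (simp add: replicate_append_same[symmetric])
  ultimately show ?case by (metis append_Cons pcong_trans)
qed

lemma pcong_R_aba_a_power_b_power_a:
  "(replicate k ga @ replicate (Suc n) gb @ [ga], replicate (Suc n) gb @ [ga]) \<in> pcong R_aba"
proof (induction k)
  case (Suc k)
  then have "(ga # replicate k ga @ replicate (Suc n) gb @ [ga], ga # replicate (Suc n) gb @ [ga])
      \<in> pcong R_aba"
    using pcong_append_context[where x = "[ga]" and y = "[]"] by fastforce
  then show ?case using pcong_R_aba_a_b_power_a pcong_trans by fastforce
qed simp

lemma evalw_pmult_R_aba_snoc_a:
  assumes "xs \<noteq> []" "set xs \<subseteq> pcarrier R_aba"
  shows "evalw (pmult R_aba) (xs @ [pclass R_aba [ga]]) = pclass R_aba (rep_word xs @ [ga])"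
proof -
  have "pclass R_aba [ga] \<in> pcarrier R_aba" unfolding pcarrier_def by blast
  moreover have "class_rep (pclass R_aba [ga]) = [ga]"
    using pclass_R_aba_replicate[of 1 0] by simp
  ultimately show ?thesis using assms evalw_pmult[of "xs @ [pclass R_aba [ga]]"] by simp
qed

lemma count_gb_evalw_R_aba_snoc_a:
  assumes "xs \<noteq> []" "set xs \<subseteq> pcarrier R_aba" "ys \<noteq> []" "set ys \<subseteq> pcarrier R_aba"
    and "evalw (pmult R_aba) (xs @ [pclass R_aba [ga]]) = evalw (pmult R_aba) ys"
  shows "count_list (rep_word xs) gb = count_list (rep_word ys) gb"
proof -
  have "pclass R_aba (rep_word xs @ [ga]) = pclass R_aba (rep_word ys)"
    using assms evalw_pmult_R_aba_snoc_a evalw_pmult by metis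
  then have "count_list (rep_word xs @ [ga]) gb = count_list (rep_word ys) gb"
    using count_gb_pcong_R_aba by (simp only: pclass_eq_iff)
  then show ?thesis by simp
qed

lemma R_aba_automatic_witnesses:
  assumes A: "A \<subseteq> pcarrier R_aba" "finite A"
    and L: "L \<subseteq> lists A - {[]}" "evalw (pmult R_aba) ` L = pcarrier R_aba"
  obtains \<alpha> \<gamma> where "\<alpha> \<in> L" "\<gamma> \<in> L"
    "evalw (pmult R_aba) (\<alpha> @ [pclass R_aba [ga]]) = evalw (pmult R_aba) \<gamma>"
    "length \<gamma> \<le> length \<alpha>" "count_list (rep_word (take (length \<gamma>) \<alpha>)) gb = 0"
    "count_list (rep_word \<alpha>) gb = Suc n"
proof -
  let ?ev = "evalw (pmult R_aba)"
  have onto: "\<exists>xs\<in>L. ?ev xs = pclass R_aba w" if "w \<noteq> []" for w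
  proof -
    have "pclass R_aba w \<in> ?ev ` L" unfolding L(2) pcarrier_def using that by blast
    then show ?thesis by (auto simp: image_iff)
  qed
  obtain M where M: "\<And>xs. set xs \<subseteq> A \<Longrightarrow> length (rep_word xs) \<le> M * length xs"
    using length_concat_map_bounded[OF A(2)] by blast
  obtain \<gamma> where \<gamma>: "\<gamma> \<in> L" "?ev \<gamma> = pclass R_aba (replicate (Suc n) gb @ [ga])"
    using onto by blast
  \<comment> \<open>the a-block is longer than the representative word of any |\<gamma>| generators\<close>
  define w where "w = replicate (M * length \<gamma> + 1) ga @ replicate (Suc n) gb"
  obtain \<alpha> where \<alpha>: "\<alpha> \<in> L" "?ev \<alpha> = pclass R_aba w"
    using onto[of w] by (auto simp: w_def)
  have \<alpha>A: "set \<alpha> \<subseteq> A" "\<alpha> \<noteq> []" using \<alpha>(1) L(1) by auto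
  have "?ev \<alpha> = pclass R_aba (rep_word \<alpha>)"
    using evalw_pmult_lists[OF A(1)] \<alpha>(1) L(1) by blast
  then have "pclass R_aba (rep_word \<alpha>) = {w}"
    using \<alpha>(2) pclass_R_aba_replicate[of "M * length \<gamma> + 1" "Suc n", folded w_def] by simp
  then have rep_\<alpha>: "rep_word \<alpha> = w" by (metis mem_pclass_iff pcong_refl singletonD)
  have len: "length \<gamma> \<le> length \<alpha>"
  proof (rule ccontr)
    assume "\<not> ?thesis"
    then have "length w \<le> M * length \<gamma>"
      using M[OF \<alpha>A(1)] rep_\<alpha> by (metis le_trans less_imp_le_nat linorder_not_le mult_le_mono2)
    then show False by (simp add: w_def)
  qed
  have prefix: "count_list (rep_word (take (length \<gamma>) \<alpha>)) gb = 0"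
  proof -
    let ?p = "rep_word (take (length \<gamma>) \<alpha>)"
    have "set (take (length \<gamma>) \<alpha>) \<subseteq> A"
      using set_take_subset \<alpha>A(1) by (rule order_trans)
    then have "length ?p \<le> M * length \<gamma> + 1" using M len by fastforce
    moreover have "?p @ rep_word (drop (length \<gamma>) \<alpha>) = w"
      using rep_\<alpha> by (metis append_take_drop_id concat_append map_append)
    ultimately have "?p = replicate (length ?p) ga"
      unfolding w_def by (rule append_eq_replicate_append_prefix[rotated])
    then show ?thesis by (metis count_notin gen_ab.distinct(1) in_set_replicate)
  qed
  have "(w @ [ga], replicate (Suc n) gb @ [ga]) \<in> pcong R_aba"
    using pcong_R_aba_a_power_b_power_a[of "M * length \<gamma> + 1" n] by (simp add: w_def)
  then have "?ev (\<alpha> @ [pclass R_aba [ga]]) = ?ev \<gamma>"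
    using \<alpha>A A(1) rep_\<alpha> \<gamma>(2) evalw_pmult_R_aba_snoc_a pclass_eq_iff by (metis order_trans)
  moreover have "count_list w gb = Suc n"
    unfolding w_def by (induction n) auto
  ultimately show ?thesis
    using that \<alpha>(1) \<gamma>(1) len prefix rep_\<alpha> by simp
qed

theorem lemma3p2p4:
  shows "\<not> automatic (pcarrier R_aba) (pmult R_aba)"
proof
  let ?ev = "evalw (pmult R_aba)" and ?a = "pclass R_aba [ga]"
  let ?cnt = "\<lambda>xs. count_list (rep_word xs) gb"
  assume "automatic (pcarrier R_aba) (pmult R_aba)"
  then obtain A L where A: "A \<subseteq> pcarrier R_aba" "finite A"
    and L: "L \<subseteq> lists A - {[]}" "?ev ` L = pcarrier R_aba"
    and padded: "\<forall>a \<in> Some ` A \<union> {None}. regular {padR \<alpha> \<beta> | \<alpha> \<beta>. \<alpha> \<in> L \<and> \<beta> \<in> L \<and>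
        ?ev (\<alpha> @ (case a of None \<Rightarrow> [] | Some x \<Rightarrow> [x])) = ?ev \<beta>}"
    unfolding automatic_def by (elim exE conjE) (rule that)
  define P where "P \<alpha> \<beta> \<longleftrightarrow> \<alpha> \<in> L \<and> \<beta> \<in> L \<and> ?ev (\<alpha> @ [?a]) = ?ev \<beta>" for \<alpha> \<beta>
  have "?a \<in> A"
    using pclass_singleton_in_generators[OF A(1) L] pclass_R_aba_replicate[of 1 0] by simp
  then have reg: "regular {padR \<alpha> \<beta> | \<alpha> \<beta>. P \<alpha> \<beta>}"
    using padded unfolding P_def by force
  have "\<exists>\<alpha> \<gamma>. P \<alpha> \<gamma> \<and> length \<gamma> \<le> length \<alpha> \<and> ?cnt (take (length \<gamma>) \<alpha>) = 0 \<and> ?cnt \<alpha> = Suc n" for n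
    using R_aba_automatic_witnesses[OF A L, of n] unfolding P_def by blast
  then obtain \<alpha> \<gamma> where wit: "\<And>n. P (\<alpha> n) (\<gamma> n)" "\<And>n. length (\<gamma> n) \<le> length (\<alpha> n)"
    "\<And>n. ?cnt (take (length (\<gamma> n)) (\<alpha> n)) = 0" "\<And>n. ?cnt (\<alpha> n) = Suc n"
    by metis
  obtain i j where "i \<noteq> j"
    and exchanged: "P (take (length (\<gamma> i)) (\<alpha> i) @ drop (length (\<gamma> j)) (\<alpha> j)) (\<gamma> i)"
    by (rule regular_padR_exchange[OF reg wit(1,2)])
  have count_P: "?cnt \<alpha>' = ?cnt \<gamma>'" if "P \<alpha>' \<gamma>'" for \<alpha>' \<gamma>'
    using that L(1) A(1) unfolding P_def by (intro count_gb_evalw_R_aba_snoc_a) auto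
  have "Suc i = ?cnt (take (length (\<gamma> i)) (\<alpha> i) @ drop (length (\<gamma> j)) (\<alpha> j))"
    using count_P[OF exchanged] count_P[OF wit(1)] wit(4) by simp
  also have "\<dots> = ?cnt (take (length (\<gamma> j)) (\<alpha> j) @ drop (length (\<gamma> j)) (\<alpha> j))"
    using wit(3) by (simp del: append_take_drop_id)
  also have "\<dots> = ?cnt (\<alpha> j)" by (simp only: append_take_drop_id)
  finally show False using wit(4) \<open>i \<noteq> j\<close> by simp
qed

end
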